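(* Let $G$ be a (discrete) group and $H$ a Hecke subgroup of $G$ such that the discrete Hecke pair $(G,H)$ is finitely generated. Then there exists a locally bounded and proper length function on $(G,H)$, i.e. a length function $l$ on $G$ with $l|_H=0$ such that for every $n$ the set $\{Hx\in H\backslash G: l(x)\le n\}$ is finite.
   Context: $H$ is a Hecke subgroup of a group $G$ if $[H:H\cap xHx^{-1}]<\infty$ for all $x\in G$. A length function on $G$ is a function $l:G\to[0,\infty)$ with $l(e)=0$, $l(g)=l(g^{-1})$, $l(gh)\le l(g)+l(h)$; it is a length function on $(G,H)$ if $l$ vanishes on $H$. The pair $(G,H)$ is finitely generated if there is a finite set $S\subseteq G$ with $H\backslash G=\bigcup_{n\in\mathbb N}H\hat S^n$, where $\hat S=S\cup S^{-1}\cup\{e\}$. (For discrete pairs local boundedness is automatic and properness means finiteness of the sets above.) *)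

theory Defs
  imports Complex_Main "HOL-Algebra.Coset"
begin

definition hecke_subgroup :: "('a, 'b) monoid_scheme \<Rightarrow> 'a set \<Rightarrow> bool" where
  "hecke_subgroup G H \<longleftrightarrow> subgroup H G \<and>
     (\<forall>x \<in> carrier G.
        finite {(H \<inter> ((x <#\<^bsub>G\<^esub> H) #>\<^bsub>G\<^esub> inv\<^bsub>G\<^esub> x)) #>\<^bsub>G\<^esub> h | h. h \<in> H})"

definition sym_hat :: "('a, 'b) monoid_scheme \<Rightarrow> 'a set \<Rightarrow> 'a set" where
  "sym_hat G S = S \<union> (\<lambda>s. inv\<^bsub>G\<^esub> s) ` S \<union> {\<one>\<^bsub>G\<^esub>}"

fun set_pow :: "('a, 'b) monoid_scheme \<Rightarrow> 'a set \<Rightarrow> nat \<Rightarrow> 'a set" where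
  "set_pow G A 0 = {\<one>\<^bsub>G\<^esub>}"
| "set_pow G A (Suc n) = set_pow G A n <#>\<^bsub>G\<^esub> A"

definition fg_pair :: "('a, 'b) monoid_scheme \<Rightarrow> 'a set \<Rightarrow> bool" where
  "fg_pair G H \<longleftrightarrow> (\<exists>S. finite S \<and> S \<subseteq> carrier G \<and>
      carrier G = (\<Union>n. H <#>\<^bsub>G\<^esub> set_pow G (sym_hat G S) n))"

definition length_function :: "('a, 'b) monoid_scheme \<Rightarrow> ('a \<Rightarrow> real) \<Rightarrow> bool" where
  "length_function G l \<longleftrightarrow>
     (\<forall>g \<in> carrier G. l g \<ge> 0) \<and> l \<one>\<^bsub>G\<^esub> = 0 \<and>
     (\<forall>g \<in> carrier G. l (inv\<^bsub>G\<^esub> g) = l g) \<and>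
     (\<forall>g \<in> carrier G. \<forall>h \<in> carrier G. l (g \<otimes>\<^bsub>G\<^esub> h) \<le> l g + l h)"

definition pair_length_function :: "('a, 'b) monoid_scheme \<Rightarrow> 'a set \<Rightarrow> ('a \<Rightarrow> real) \<Rightarrow> bool" where
  "pair_length_function G H l \<longleftrightarrow> length_function G l \<and> (\<forall>h \<in> H. l h = 0)"

definition proper_length :: "('a, 'b) monoid_scheme \<Rightarrow> 'a set \<Rightarrow> ('a \<Rightarrow> real) \<Rightarrow> bool" where
  "proper_length G H l \<longleftrightarrow>
     (\<forall>n::nat. finite {H #>\<^bsub>G\<^esub> x | x. x \<in> carrier G \<and> l x \<le> real n})"

end

theory Submission
  imports Defs
begin

text \<open>Take a finite symmetric generating set T of the pair and let l(x) be the least n with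
  x \<in> B(n) = H (T H)^n. These balls are symmetric and satisfy B(m) B(n) = B(m + n), so l is a
  length function vanishing on H. For properness, every right coset of H in B(n + 1) has the
  form H b s h with b \<in> B(n), s \<in> T, h \<in> H; by the Hecke condition a single coset H y yields
  only finitely many cosets H y h, since these depend only on the coset (H \<inter> y^-1 H y) h.\<close>

text \<open>Interleaving H between the generators, rather than using H T^n, is what makes the
  balls closed under multiplication and inversion.\<close>

fun rel_ball :: "('a, 'b) monoid_scheme \<Rightarrow> 'a set \<Rightarrow> 'a set \<Rightarrow> nat \<Rightarrow> 'a set" where
  "rel_ball G H T 0 = H"
| "rel_ball G H T (Suc n) = rel_ball G H T n <#>\<^bsub>G\<^esub> (T <#>\<^bsub>G\<^esub> H)"

definition rel_word_length :: "('a, 'b) monoid_scheme \<Rightarrow> 'a set \<Rightarrow> 'a set \<Rightarrow> 'a \<Rightarrow> nat" where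
  "rel_word_length G H T x = (LEAST n. x \<in> rel_ball G H T n)"

lemma rel_word_length_le: "x \<in> rel_ball G H T n \<Longrightarrow> rel_word_length G H T x \<le> n"
  unfolding rel_word_length_def by (rule Least_le)

lemma rel_ball_rel_word_length:
  "x \<in> rel_ball G H T n \<Longrightarrow> x \<in> rel_ball G H T (rel_word_length G H T x)"
  unfolding rel_word_length_def by (rule LeastI)

context group
begin

lemma set_inv_set_mult:
  assumes "A \<subseteq> carrier G" "B \<subseteq> carrier G"
  shows "set_inv (A <#> B) = set_inv B <#> set_inv A"
  using assms by (auto simp: SET_INV_def set_mult_def inv_mult_group subsetD)

lemma set_inv_subgroup:
  assumes "subgroup H G"
  shows "set_inv H = H"
proof -
  have "inv h \<in> H" "h = inv (inv h)" if "h \<in> H" for h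
    using that assms by (auto simp: subgroup.m_inv_closed subgroup.mem_carrier)
  then show ?thesis unfolding SET_INV_def by blast
qed

lemma subset_set_mult_subgroup:
  assumes "subgroup H G" "T \<subseteq> carrier G"
  shows "T \<subseteq> T <#> H"
proof
  fix s assume "s \<in> T"
  then have "s = s \<otimes> \<one>" "\<one> \<in> H" using assms by (auto simp: subgroup.one_closed)
  with \<open>s \<in> T\<close> show "s \<in> T <#> H" unfolding set_mult_def by blast
qed

lemma rcos_mult_conj_subgroup:
  assumes H: "subgroup H G" and y: "y \<in> carrier G"
    and k: "k \<in> (inv y <# H) #> y" and z: "z \<in> carrier G"
  shows "(H #> y) #> (k \<otimes> z) = (H #> y) #> z"
proof -
  obtain h where h: "h \<in> H" "k = inv y \<otimes> h \<otimes> y"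
    using k unfolding l_coset_def r_coset_def by blast
  have carr: "h \<in> carrier G" "k \<in> carrier G" "H \<subseteq> carrier G"
    using h y subgroup.mem_carrier[OF H] subgroup.subset[OF H] by auto
  have "y \<otimes> (k \<otimes> z) = h \<otimes> (y \<otimes> z)"
    using h carr y z by (simp add: m_assoc[symmetric])
  then have "(H #> y) #> (k \<otimes> z) = (H #> h) #> (y \<otimes> z)"
    using carr y z by (simp add: coset_mult_assoc)
  also have "\<dots> = (H #> y) #> z"
    using subgroup.rcos_const[OF H is_group h(1)] carr y z by (simp add: coset_mult_assoc)
  finally show ?thesis .
qed

lemma hecke_rcosets_mult_finite:
  assumes hecke: "hecke_subgroup G H" and C: "C \<in> rcosets H"
  shows "finite ((\<lambda>h. C #> h) ` H)"
proof -
  have H: "subgroup H G" using hecke by (simp add: hecke_subgroup_def)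
  obtain y where y: "y \<in> carrier G" and Cy: "C = H #> y"
    using C unfolding RCOSETS_def by blast
  define K where "K = H \<inter> ((inv y <# H) #> y)"
  have "finite {(H \<inter> ((inv y <# H) #> inv (inv y))) #> h | h. h \<in> H}"
    using hecke y unfolding hecke_subgroup_def by blast
  then have K_fin: "finite ((\<lambda>h. K #> h) ` H)"
    using y by (simp add: K_def Setcompr_eq_image)
  have K_stab: "C #> c = C #> h" if h: "h \<in> H" and c: "c \<in> K #> h" for h c
  proof -
    obtain k where "k \<in> K" "c = k \<otimes> h" using c unfolding r_coset_def by blast
    then show ?thesis
      using rcos_mult_conj_subgroup[OF H y] h subgroup.mem_carrier[OF H] Cy by (simp add: K_def)
  qed
  have "\<one> \<in> K"
  proof -
    have "inv y \<otimes> \<one> \<otimes> y \<in> (inv y <# H) #> y"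
      using H unfolding l_coset_def r_coset_def by (blast intro: subgroup.one_closed)
    then show ?thesis using H y by (simp add: K_def subgroup.one_closed)
  qed
  then have h_in_Kh: "h \<in> K #> h" if "h \<in> H" for h
    using that H unfolding r_coset_def by (force simp: subgroup.mem_carrier)
  have "C #> h = C #> (SOME c. c \<in> K #> h)" if "h \<in> H" for h
    using K_stab[OF that] someI[of "\<lambda>c. c \<in> K #> h", OF h_in_Kh[OF that]] by simp
  then have "(\<lambda>h. C #> h) ` H = (\<lambda>D. C #> (SOME c. c \<in> D)) ` ((\<lambda>h. K #> h) ` H)"
    unfolding image_image by (rule image_cong[OF refl])
  with K_fin show ?thesis by simp
qed

context
  fixes H T
  assumes H: "subgroup H G" and T: "T \<subseteq> carrier G"
begin

lemma rel_ball_carrier: "rel_ball G H T n \<subseteq> carrier G"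
  by (induction n) (simp_all add: subgroup.subset[OF H] T set_mult_closed)

lemma rel_ball_add: "rel_ball G H T m <#> rel_ball G H T n = rel_ball G H T (m + n)"
proof (induction n)
  case 0
  have "rel_ball G H T m <#> H = rel_ball G H T m"
  proof (cases m)
    case 0 then show ?thesis using H by (simp add: subgroup_mult_id)
  next
    case (Suc k)
    then show ?thesis
      using rel_ball_carrier T subgroup.subset[OF H]
      by (simp add: set_mult_assoc set_mult_closed subgroup_mult_id[OF H])
  qed
  then show ?case by simp
next
  case (Suc n)
  then show ?case
    using rel_ball_carrier T subgroup.subset[OF H]
    by (simp flip: set_mult_assoc add: set_mult_closed)
qed

lemma rel_ball_mult:
  "x \<in> rel_ball G H T m \<Longrightarrow> y \<in> rel_ball G H T n \<Longrightarrow> x \<otimes> y \<in> rel_ball G H T (m + n)"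
  using rel_ball_add[of m n] unfolding set_mult_def by blast

lemma set_inv_rel_ball:
  assumes T_sym: "\<forall>s\<in>T. inv s \<in> T"
  shows "set_inv (rel_ball G H T n) = rel_ball G H T n"
proof (induction n)
  case 0 then show ?case using H by (simp add: set_inv_subgroup)
next
  case (Suc n)
  have "set_inv T = T"
    using T T_sym unfolding SET_INV_def by (force simp: subsetD)
  then have "set_inv (rel_ball G H T (Suc n)) = H <#> T <#> rel_ball G H T n"
    using Suc rel_ball_carrier T subgroup.subset[OF H]
    by (simp add: set_inv_set_mult set_inv_subgroup[OF H] set_mult_closed set_mult_assoc)
  also have "\<dots> = H <#> T <#> (H <#> rel_ball G H T n)"
    using rel_ball_add[of 0 n] by simp
  also have "\<dots> = rel_ball G H T (Suc 0) <#> rel_ball G H T n"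
    using rel_ball_carrier T subgroup.subset[OF H]
    by (simp add: set_mult_assoc set_mult_closed)
  finally show ?case using rel_ball_add[of "Suc 0" n] by simp
qed

lemma rel_ball_inv:
  assumes "\<forall>s\<in>T. inv s \<in> T" "x \<in> rel_ball G H T n"
  shows "inv x \<in> rel_ball G H T n"
  using set_inv_rel_ball[OF assms(1)] assms(2) unfolding SET_INV_def by blast

lemma set_mult_set_pow_subset_rel_ball: "H <#> set_pow G T n \<subseteq> rel_ball G H T n"
proof (induction n)
  case 0
  show ?case using subgroup.subset[OF H] by (simp flip: r_coset_eq_set_mult)
next
  case (Suc n)
  have "set_pow G T n \<subseteq> carrier G"
    using T by (induction n) (simp_all add: set_mult_closed)
  then have "H <#> set_pow G T (Suc n) = (H <#> set_pow G T n) <#> T"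
    using subgroup.subset[OF H] T by (simp add: set_mult_assoc)
  also have "\<dots> \<subseteq> rel_ball G H T (Suc n)"
    using Suc subset_set_mult_subgroup[OF H T] by (simp add: mono_set_mult)
  finally show ?case .
qed

lemma finite_rcosets_rel_ball:
  assumes hecke: "hecke_subgroup G H" and "finite T"
  shows "finite ((\<lambda>x. H #> x) ` rel_ball G H T n)"
proof (induction n)
  case 0
  have "(\<lambda>x. H #> x) ` H \<subseteq> {H}" using subgroup.rcos_const[OF H is_group] by blast
  then show ?case by (simp add: finite_subset)
next
  case (Suc n)
  have "(\<lambda>x. H #> x) ` rel_ball G H T (Suc n) \<subseteq>
        (\<Union>C \<in> (\<lambda>x. H #> x) ` rel_ball G H T n. \<Union>s\<in>T. (\<lambda>h. (C #> s) #> h) ` H)"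
  proof clarify
    fix x assume "x \<in> rel_ball G H T (Suc n)"
    then obtain b s h where bsh: "b \<in> rel_ball G H T n" "s \<in> T" "h \<in> H" "x = b \<otimes> (s \<otimes> h)"
      by (auto simp: set_mult_def)
    moreover have "b \<in> carrier G" "s \<in> carrier G" "h \<in> carrier G"
      using bsh rel_ball_carrier subgroup.subset[OF H] T by blast+
    ultimately have "H #> x = ((H #> b) #> s) #> h"
      using subgroup.subset[OF H] by (simp add: coset_mult_assoc m_assoc)
    with bsh(1-3) show "H #> x \<in> (\<Union>C \<in> (\<lambda>x. H #> x) ` rel_ball G H T n. \<Union>s\<in>T. (\<lambda>h. (C #> s) #> h) ` H)"
      by blast
  qed
  moreover have "C #> s \<in> rcosets H" if C: "C \<in> (\<lambda>x. H #> x) ` rel_ball G H T n" and s: "s \<in> T" for C s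
  proof -
    obtain b where "b \<in> rel_ball G H T n" "C = H #> b" using C by blast
    moreover have "b \<in> carrier G" "s \<in> carrier G"
      using calculation(1) s rel_ball_carrier T by blast+
    ultimately show ?thesis using subgroup.subset[OF H] by (simp add: coset_mult_assoc rcosetsI)
  qed
  then have "finite (\<Union>C \<in> (\<lambda>x. H #> x) ` rel_ball G H T n. \<Union>s\<in>T. (\<lambda>h. (C #> s) #> h) ` H)"
    by (intro finite_UN_I Suc.IH \<open>finite T\<close> hecke_rcosets_mult_finite[OF hecke])
  ultimately show ?case by (rule finite_subset)
qed

lemma pair_length_function_rel_word_length:
  assumes T_sym: "\<forall>s\<in>T. inv s \<in> T" and cover: "carrier G \<subseteq> (\<Union>n. rel_ball G H T n)"
  shows "pair_length_function G H (\<lambda>x. real (rel_word_length G H T x))"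
proof -
  let ?L = "rel_word_length G H T"
  have ball: "x \<in> rel_ball G H T (?L x)" if "x \<in> carrier G" for x
    using that cover by (blast intro: rel_ball_rel_word_length)
  have zero: "?L h = 0" if "h \<in> H" for h
    using rel_word_length_le[of h G H T 0] that by simp
  have inv_le: "?L (inv x) \<le> ?L x" if "x \<in> carrier G" for x
    using rel_ball_inv[OF T_sym ball[OF that]] by (rule rel_word_length_le)
  have "?L (inv x) = ?L x" if "x \<in> carrier G" for x
    using inv_le[OF that] inv_le[of "inv x"] that by simp
  moreover have "?L (x \<otimes> y) \<le> ?L x + ?L y" if "x \<in> carrier G" "y \<in> carrier G" for x y
    using rel_ball_mult[OF ball[OF that(1)] ball[OF that(2)]] by (rule rel_word_length_le)
  ultimately show ?thesis
    unfolding pair_length_function_def length_function_def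
    using zero subgroup.one_closed[OF H] by (simp flip: of_nat_add)
qed

lemma proper_length_rel_word_length:
  assumes hecke: "hecke_subgroup G H" and "finite T"
    and cover: "carrier G \<subseteq> (\<Union>n. rel_ball G H T n)"
  shows "proper_length G H (\<lambda>x. real (rel_word_length G H T x))"
  unfolding proper_length_def
proof
  fix n :: nat
  have "{H #> x | x. x \<in> carrier G \<and> real (rel_word_length G H T x) \<le> real n}
        \<subseteq> (\<Union>k\<le>n. (\<lambda>x. H #> x) ` rel_ball G H T k)"
  proof clarify
    fix x assume "x \<in> carrier G" "real (rel_word_length G H T x) \<le> real n"
    with cover show "H #> x \<in> (\<Union>k\<le>n. (\<lambda>x. H #> x) ` rel_ball G H T k)"
      using rel_ball_rel_word_length by fastforce
  qed
  moreover have "finite (\<Union>k\<le>n. (\<lambda>x. H #> x) ` rel_ball G H T k)"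
    using finite_rcosets_rel_ball[OF hecke \<open>finite T\<close>] by simp
  ultimately show "finite {H #> x | x. x \<in> carrier G \<and> real (rel_word_length G H T x) \<le> real n}"
    by (rule finite_subset)
qed

end

lemma exists_proper_pair_length_function:
  assumes hecke: "hecke_subgroup G H" and fg: "fg_pair G H"
  shows "\<exists>l. pair_length_function G H l \<and> proper_length G H l"
proof -
  have H: "subgroup H G" using hecke by (simp add: hecke_subgroup_def)
  obtain S where S: "finite S" "S \<subseteq> carrier G"
    and cover: "carrier G = (\<Union>n. H <#> set_pow G (sym_hat G S) n)"
    using fg by (auto simp: fg_pair_def)
  define T where "T = sym_hat G S"
  have T: "T \<subseteq> carrier G" "finite T" "\<forall>s\<in>T. inv s \<in> T"
    using S by (auto simp: T_def sym_hat_def subsetD)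
  have "carrier G \<subseteq> (\<Union>n. rel_ball G H T n)"
    using cover set_mult_set_pow_subset_rel_ball[OF H T(1)] by (auto simp: T_def)
  then show ?thesis
    using pair_length_function_rel_word_length[OF H T(1) T(3)]
      proper_length_rel_word_length[OF H T(1) hecke T(2)] by blast
qed

end

theorem lemma2p11:
  fixes G :: "('a, 'b) monoid_scheme" and H :: "'a set"
  assumes "group G"
    and "hecke_subgroup G H"
    and "fg_pair G H"
  shows "\<exists>l. pair_length_function G H l \<and> proper_length G H l"
  using group.exists_proper_pair_length_function[OF assms] .

end
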